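(* Let $\mu\in\mathbb{R}^N$, $\nu\in\mathbb{R}^M$ be nonnegative vectors with $\sum_i\mu_i=\sum_j\nu_j$, let $c\in\mathbb{R}^{N\times M}$ and $\gamma>0$. Define the map $T:(\alpha,\beta)\mapsto(\alpha',\beta')$ on $\mathbb{R}^N\times\mathbb{R}^M$ by \[ \pi_{ij}=\tfrac1\gamma(\alpha_i+\beta_j-c_{ij})_+,\quad f_i=-\gamma\Bigl(\sum_j\pi_{ij}-\mu_i\Bigr),\quad g_j=-\gamma\Bigl(\sum_i\pi_{ij}-\nu_j\Bigr), \] \[ \alpha'_i=\alpha_i+\tfrac1M\Bigl(f_i-\tfrac{1}{2N}\textstyle\sum_{k}f_k\Bigr),\qquad \beta'_j=\beta_j+\tfrac1N\Bigl(g_j-\tfrac{1}{2M}\textstyle\sum_{l}g_l\Bigr). \] If $(\alpha,\beta)$ is a fixed point of $T$, then the matrix $\pi=(\alpha\oplus\beta-c)_+/\gamma$ is an optimal solution of \[ \min\Bigl\{\sum_{i,j}c_{ij}\pi_{ij}+\tfrac\gamma2\|\pi\|_2^2:\ \pi\in\mathbb{R}^{N\times M},\ \pi\ge0,\ \pi\mathbf 1=\mu,\ \pi^T\mathbf 1=\nu\Bigr\}. \]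
   Context: $(\alpha\oplus\beta)_{ij}:=\alpha_i+\beta_j$, $t_+=\max(t,0)$ applied entrywise, $\|\pi\|_2$ is the Frobenius norm, $\mathbf 1$ is the all-ones vector of appropriate size, and $\pi\ge 0$ is meant entrywise. *)

theory Defs
  imports "HOL-Analysis.Analysis"
begin

text \<open>Vectors in R^N, R^M are indexed by finite types 'n, 'm (N = CARD('n), M = CARD('m));
matrices in R^(N x M) are real^'m^'n, with pi $ i $ j the (i,j) entry.\<close>

definition pos_part :: "real \<Rightarrow> real" where
  "pos_part t = max t 0"

definition plan :: "real \<Rightarrow> real^'m^'n \<Rightarrow> real^'n \<Rightarrow> real^'m \<Rightarrow> real^'m^'n" where
  "plan \<gamma> c \<alpha> \<beta> = (\<chi> i j. pos_part (\<alpha> $ i + \<beta> $ j - c $ i $ j) / \<gamma>)"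

definition T_map :: "real^'n \<Rightarrow> real^'m \<Rightarrow> real^'m^'n \<Rightarrow> real
    \<Rightarrow> (real^'n) \<times> (real^'m) \<Rightarrow> (real^'n) \<times> (real^'m)" where
  "T_map \<mu> \<nu> c \<gamma> ab =
     (let \<alpha> = fst ab; \<beta> = snd ab;
          \<pi> = plan \<gamma> c \<alpha> \<beta>;
          N = real CARD('n); M = real CARD('m);
          f = (\<lambda>i. - \<gamma> * ((\<Sum>j\<in>UNIV. \<pi> $ i $ j) - \<mu> $ i));
          g = (\<lambda>j. - \<gamma> * ((\<Sum>i\<in>UNIV. \<pi> $ i $ j) - \<nu> $ j))
      in ((\<chi> i. \<alpha> $ i + (1 / M) * (f i - (1 / (2 * N)) * (\<Sum>k\<in>UNIV. f k))),
          (\<chi> j. \<beta> $ j + (1 / N) * (g j - (1 / (2 * M)) * (\<Sum>l\<in>UNIV. g l)))))"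

definition ot_objective :: "real^'m^'n \<Rightarrow> real \<Rightarrow> real^'m^'n \<Rightarrow> real" where
  "ot_objective c \<gamma> \<pi> =
     (\<Sum>i\<in>UNIV. \<Sum>j\<in>UNIV. c $ i $ j * \<pi> $ i $ j) + (\<gamma> / 2) * (norm \<pi>)\<^sup>2"

definition feasible :: "real^'n \<Rightarrow> real^'m \<Rightarrow> real^'m^'n \<Rightarrow> bool" where
  "feasible \<mu> \<nu> \<pi> \<longleftrightarrow>
     (\<forall>i j. \<pi> $ i $ j \<ge> 0) \<and>
     (\<forall>i. (\<Sum>j\<in>UNIV. \<pi> $ i $ j) = \<mu> $ i) \<and>
     (\<forall>j. (\<Sum>i\<in>UNIV. \<pi> $ i $ j) = \<nu> $ j)"

definition optimal :: "real^'n \<Rightarrow> real^'m \<Rightarrow> real^'m^'n \<Rightarrow> real \<Rightarrow> real^'m^'n \<Rightarrow> bool" where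
  "optimal \<mu> \<nu> c \<gamma> \<pi> \<longleftrightarrow>
     feasible \<mu> \<nu> \<pi> \<and> (\<forall>\<sigma>. feasible \<mu> \<nu> \<sigma> \<longrightarrow> ot_objective c \<gamma> \<pi> \<le> ot_objective c \<gamma> \<sigma>)"

end

theory Submission
  imports Defs
begin

text \<open>At a fixed point of T the updates vanish; since every entry of f equals half the mean of f,
  f = 0, i.e. the plan has marginals \<mu> and \<nu>. The duals \<alpha>, \<beta> then certify optimality:
  c + \<gamma>\<pi> \<ge> \<alpha> \<oplus> \<beta> with equality on the support of \<pi> (the KKT conditions of the strongly
  convex problem), and the pairing of \<alpha> \<oplus> \<beta> with a feasible plan depends only on \<mu> and \<nu>.\<close>

lemma eq_half_mean_imp_zero:
  fixes f :: "'a::finite \<Rightarrow> 'b::linordered_field"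
  assumes "\<And>k. f k - (1 / (2 * of_nat CARD('a))) * (\<Sum>l\<in>UNIV. f l) = 0"
  shows "f i = 0"
proof -
  define S where "S = (\<Sum>l\<in>UNIV. f l)"
  have f_eq: "f k = S / (2 * of_nat CARD('a))" for k
    using assms[of k] by (simp add: S_def)
  have "S = (\<Sum>l\<in>UNIV. f l)"
    by (simp add: S_def)
  also have "\<dots> = S / 2"
    by (simp add: f_eq)
  finally have "S = 0"
    by linarith
  then show ?thesis
    using f_eq by simp
qed

lemma T_map_fixed_point_marginals:
  fixes \<mu> \<alpha> :: "real^'n" and \<nu> \<beta> :: "real^'m" and c :: "real^'m^'n"
  assumes "\<gamma> \<noteq> 0" and "T_map \<mu> \<nu> c \<gamma> (\<alpha>, \<beta>) = (\<alpha>, \<beta>)"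
  shows "(\<Sum>j\<in>UNIV. plan \<gamma> c \<alpha> \<beta> $ i $ j) = \<mu> $ i"
    and "(\<Sum>i\<in>UNIV. plan \<gamma> c \<alpha> \<beta> $ i $ j) = \<nu> $ j"
proof -
  define \<pi> where "\<pi> = plan \<gamma> c \<alpha> \<beta>"
  define f where "f = (\<lambda>i. - \<gamma> * ((\<Sum>j\<in>UNIV. \<pi> $ i $ j) - \<mu> $ i))"
  define g where "g = (\<lambda>j. - \<gamma> * ((\<Sum>i\<in>UNIV. \<pi> $ i $ j) - \<nu> $ j))"
  define df where "df i = (1 / real CARD('m)) * (f i - (1 / (2 * real CARD('n))) * (\<Sum>k\<in>UNIV. f k))" for i
  define dg where "dg j = (1 / real CARD('n)) * (g j - (1 / (2 * real CARD('m))) * (\<Sum>l\<in>UNIV. g l))" for j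
  have "T_map \<mu> \<nu> c \<gamma> (\<alpha>, \<beta>) = ((\<chi> i. \<alpha> $ i + df i), (\<chi> j. \<beta> $ j + dg j))"
    unfolding T_map_def Let_def f_def g_def \<pi>_def df_def dg_def by (simp only: fst_conv snd_conv)
  then have "(\<chi> i. \<alpha> $ i + df i) = \<alpha>" and "(\<chi> j. \<beta> $ j + dg j) = \<beta>"
    unfolding assms(2) by simp_all
  then have df_zero: "df i = 0" and dg_zero: "dg j = 0" for i j
    by (metis add_cancel_left_right vec_lambda_beta)+
  have "f i - (1 / (2 * real CARD('n))) * (\<Sum>k\<in>UNIV. f k) = 0"
    and "g j - (1 / (2 * real CARD('m))) * (\<Sum>l\<in>UNIV. g l) = 0" for i j
    using df_zero[of i] dg_zero[of j] unfolding df_def dg_def by simp_all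
  then have "f i = 0" and "g j = 0"
    by (blast intro: eq_half_mean_imp_zero)+
  then show "(\<Sum>j\<in>UNIV. plan \<gamma> c \<alpha> \<beta> $ i $ j) = \<mu> $ i"
    and "(\<Sum>i\<in>UNIV. plan \<gamma> c \<alpha> \<beta> $ i $ j) = \<nu> $ j"
    using assms(1) by (simp_all add: f_def g_def \<pi>_def)
qed

lemma plan_nonneg:
  assumes "\<gamma> > 0"
  shows "plan \<gamma> c \<alpha> \<beta> $ i $ j \<ge> 0"
  using assms by (simp add: plan_def pos_part_def)

lemma plan_dual_feasible:
  assumes "\<gamma> > 0"
  shows "\<alpha> $ i + \<beta> $ j \<le> c $ i $ j + \<gamma> * plan \<gamma> c \<alpha> \<beta> $ i $ j"
  using assms by (simp add: plan_def pos_part_def)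

lemma plan_complementary_slackness:
  assumes "\<gamma> > 0"
  shows "(c $ i $ j + \<gamma> * plan \<gamma> c \<alpha> \<beta> $ i $ j - (\<alpha> $ i + \<beta> $ j)) * plan \<gamma> c \<alpha> \<beta> $ i $ j = 0"
  using assms by (simp add: plan_def pos_part_def max_def)

text \<open>Pointwise form of the KKT argument: \<open>t \<mapsto> c t + g/2 t\<^sup>2 - a t\<close> is convex with
  derivative \<open>c + g p - a\<close> at p, which is \<open>\<ge> 0\<close> and vanishes unless \<open>p = 0\<close>.\<close>
lemma quadratic_cost_le_of_slackness:
  fixes c g a p s :: real
  assumes "g \<ge> 0" and "s \<ge> 0" and "a \<le> c + g * p" and "(c + g * p - a) * p = 0"
  shows "c * p + g / 2 * p\<^sup>2 - a * p \<le> c * s + g / 2 * s\<^sup>2 - a * s"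
proof -
  have "c * s + g / 2 * s\<^sup>2 - a * s - (c * p + g / 2 * p\<^sup>2 - a * p)
      = (c + g * p - a) * s - (c + g * p - a) * p + g / 2 * (s - p)\<^sup>2"
    by (simp add: algebra_simps power2_eq_square)
  moreover have "(c + g * p - a) * s \<ge> 0"
    using assms(2,3) by simp
  moreover have "g / 2 * (s - p)\<^sup>2 \<ge> 0"
    using assms(1) by simp
  ultimately show ?thesis
    using assms(4) by linarith
qed

lemma dual_pairing_feasible:
  assumes "feasible \<mu> \<nu> \<pi>"
  shows "(\<Sum>i\<in>UNIV. \<Sum>j\<in>UNIV. (\<alpha> $ i + \<beta> $ j) * \<pi> $ i $ j)
       = (\<Sum>i\<in>UNIV. \<alpha> $ i * \<mu> $ i) + (\<Sum>j\<in>UNIV. \<beta> $ j * \<nu> $ j)"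
proof -
  have "(\<Sum>i\<in>UNIV. \<Sum>j\<in>UNIV. (\<alpha> $ i + \<beta> $ j) * \<pi> $ i $ j)
      = (\<Sum>i\<in>UNIV. \<alpha> $ i * (\<Sum>j\<in>UNIV. \<pi> $ i $ j)) + (\<Sum>i\<in>UNIV. \<Sum>j\<in>UNIV. \<beta> $ j * \<pi> $ i $ j)"
    by (simp add: distrib_right sum.distrib sum_distrib_left)
  also have "(\<Sum>i\<in>UNIV. \<Sum>j\<in>UNIV. \<beta> $ j * \<pi> $ i $ j) = (\<Sum>j\<in>UNIV. \<beta> $ j * (\<Sum>i\<in>UNIV. \<pi> $ i $ j))"
    by (subst sum.swap) (simp add: sum_distrib_left)
  finally show ?thesis
    using assms by (simp add: feasible_def)
qed

lemma norm_matrix_squared: "(norm (x :: real^'m^'n))\<^sup>2 = (\<Sum>i\<in>UNIV. \<Sum>j\<in>UNIV. (x $ i $ j)\<^sup>2)"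
  unfolding power2_norm_eq_inner by (simp add: inner_vec_def power2_eq_square)

lemma optimal_of_dual_certificate:
  fixes \<pi> c :: "real^'m^'n" and \<alpha> \<mu> :: "real^'n" and \<beta> \<nu> :: "real^'m"
  assumes "\<gamma> \<ge> 0" and "feasible \<mu> \<nu> \<pi>"
    and dual: "\<And>i j. \<alpha> $ i + \<beta> $ j \<le> c $ i $ j + \<gamma> * \<pi> $ i $ j"
    and slack: "\<And>i j. (c $ i $ j + \<gamma> * \<pi> $ i $ j - (\<alpha> $ i + \<beta> $ j)) * \<pi> $ i $ j = 0"
  shows "optimal \<mu> \<nu> c \<gamma> \<pi>"
  unfolding optimal_def
proof (intro conjI allI impI)
  fix \<sigma> assume \<sigma>: "feasible \<mu> \<nu> \<sigma>"
  let ?L = "\<lambda>x :: real^'m^'n. \<Sum>i\<in>UNIV. \<Sum>j\<in>UNIV.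
             c $ i $ j * x $ i $ j + \<gamma> / 2 * (x $ i $ j)\<^sup>2 - (\<alpha> $ i + \<beta> $ j) * x $ i $ j"
  have L_eq: "?L x = ot_objective c \<gamma> x - ((\<Sum>i\<in>UNIV. \<alpha> $ i * \<mu> $ i) + (\<Sum>j\<in>UNIV. \<beta> $ j * \<nu> $ j))"
    if "feasible \<mu> \<nu> x" for x
    by (simp add: ot_objective_def norm_matrix_squared sum_subtractf sum.distrib
        sum_distrib_left dual_pairing_feasible[OF that, symmetric])
  have "?L \<pi> \<le> ?L \<sigma>"
    using \<sigma> assms(1) dual slack
    by (intro sum_mono quadratic_cost_le_of_slackness) (auto simp: feasible_def)
  then show "ot_objective c \<gamma> \<pi> \<le> ot_objective c \<gamma> \<sigma>"
    using L_eq[OF assms(2)] L_eq[OF \<sigma>] by simp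
qed (use assms(2) in simp)

theorem mainTheorem9:
  fixes \<mu> :: "real^'n" and \<nu> :: "real^'m" and c :: "real^'m^'n"
    and \<gamma> :: real and \<alpha> :: "real^'n" and \<beta> :: "real^'m"
  assumes "\<forall>i. \<mu> $ i \<ge> 0" and "\<forall>j. \<nu> $ j \<ge> 0"
    and "(\<Sum>i\<in>UNIV. \<mu> $ i) = (\<Sum>j\<in>UNIV. \<nu> $ j)"
    and "\<gamma> > 0"
    and "T_map \<mu> \<nu> c \<gamma> (\<alpha>, \<beta>) = (\<alpha>, \<beta>)"
  shows "optimal \<mu> \<nu> c \<gamma> (plan \<gamma> c \<alpha> \<beta>)"
proof (rule optimal_of_dual_certificate[where \<alpha> = \<alpha> and \<beta> = \<beta>])
  show "feasible \<mu> \<nu> (plan \<gamma> c \<alpha> \<beta>)"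
    using assms(4,5) plan_nonneg T_map_fixed_point_marginals
    unfolding feasible_def by (metis less_irrefl)
qed (use assms(4) in \<open>simp_all only: less_imp_le plan_dual_feasible plan_complementary_slackness\<close>)

end
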